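(* In any run of the MT algorithm, if $t_1<t_2$ are two resampling times, then the witness trees satisfy $\hat\tau^{t_1}\neq\hat\tau^{t_2}$.
   Context: Variable-assignment setting: variables $X_1,\dots,X_n$ with finite value sets, independent under product distribution $\Omega$. A bad-event is a finite set $B$ of pairs $(i,j)$ with distinct first coordinates (the event $\bigwedge_{(i,j)\in B}X_i=j$); $\mathcal B$ is a finite set of bad-events. $(i,j)\sim(i',j')$ iff $i=i'$, $j\ne j'$; $z\sim B$ iff some $z'\in B$ has $z\sim z'$; $i\sim B$ iff $(i,j)\in B$ for some $j$. $Y\subseteq\mathcal B$ is orderable to $E$ if $Y=\{E\}$ or $Y=\{B_1,\dots,B_s\}$ (distinct) can be ordered so that each $i$ has $z_i\in E$ with $z_i\sim B_i$ and $z_i\not\sim B_1,\dots,B_{i-1}$. MT algorithm: draw all variables from $\Omega$; while some bad-event is true, choose a true one $B$ and resample all $X_i$, $i\sim B$, from $\Omega$. Witness trees: with execution log $B_1,\dots,B_T$ (the resampled bad-events in order), $\hat\tau^t$ is built by starting with a root labeled $B_t$ and processing $B_{t-1},\dots,B_1$: a bad-event $B'$ is eligible for a node $v$ labeled $B$ whose children have distinct labels $C_1,\dots,C_r$ if $B'\notin\{C_1,\dots,C_r\}$ and $\{C_1,\dots,C_r,B'\}$ is orderable to $B$; if $B_{t'}$ is eligible for some node, it is added as a child of a deepest eligible node (ties broken arbitrarily), otherwise discarded. Trees are compared as rooted labeled trees. *)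

theory Defs
  imports "HOL-Probability.Probability_Mass_Function"
begin

text \<open>Variables have type 'v (finitely many), values type 'a. A bad-event is a set of
  pairs (i,j) meaning X_i = j.\<close>

definition zsim :: "'v \<times> 'a \<Rightarrow> 'v \<times> 'a \<Rightarrow> bool" where
  "zsim z z' \<longleftrightarrow> fst z = fst z' \<and> snd z \<noteq> snd z'"

definition zsim_ev :: "'v \<times> 'a \<Rightarrow> ('v \<times> 'a) set \<Rightarrow> bool" where
  "zsim_ev z B \<longleftrightarrow> (\<exists>z'\<in>B. zsim z z')"

definition var_in :: "'v \<Rightarrow> ('v \<times> 'a) set \<Rightarrow> bool" where
  "var_in i B \<longleftrightarrow> (\<exists>j. (i, j) \<in> B)"

definition is_bad_event :: "('v \<times> 'a) set \<Rightarrow> bool" where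
  "is_bad_event B \<longleftrightarrow> finite B \<and> inj_on fst B"

definition orderable :: "('v \<times> 'a) set set \<Rightarrow> ('v \<times> 'a) set \<Rightarrow> bool" where
  "orderable Y E \<longleftrightarrow> Y = {E} \<or>
     (\<exists>bs. distinct bs \<and> set bs = Y \<and>
        (\<forall>i < length bs. \<exists>z\<in>E. zsim_ev z (bs ! i) \<and> (\<forall>k < i. \<not> zsim_ev z (bs ! k))))"

text \<open>A possible (finite prefix of a) run of the MT algorithm with T resampling steps:
  asg t is the assignment after the t-th resampling (asg 0 the initial one),
  evlog t (1 \<le> t \<le> T) is the bad-event resampled at step t.\<close>
definition mt_run ::
  "('v \<Rightarrow> 'a pmf) \<Rightarrow> ('v \<times> 'a) set set \<Rightarrow> (nat \<Rightarrow> 'v \<Rightarrow> 'a) \<Rightarrow> (nat \<Rightarrow> ('v \<times> 'a) set) \<Rightarrow> nat \<Rightarrow> bool"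
where
  "mt_run \<Omega> \<B> asg evlog T \<longleftrightarrow>
     (\<forall>t \<le> T. \<forall>i. asg t i \<in> set_pmf (\<Omega> i)) \<and>
     (\<forall>t \<in> {1..T}. evlog t \<in> \<B> \<and>
        (\<forall>(i, j) \<in> evlog t. asg (t - 1) i = j) \<and>
        (\<forall>i. \<not> var_in i (evlog t) \<longrightarrow> asg t i = asg (t - 1) i))"

text \<open>Nodes of the tree for time t are identified by the
  evlog positions that created them (root = t); a tree is given by its parent map
  (a partial map whose domain is the set of non-root nodes); node u is labeled evlog u.
  dep records depths.\<close>
definition wt_children :: "(nat \<Rightarrow> ('v \<times> 'a) set) \<Rightarrow> (nat \<rightharpoonup> nat) \<Rightarrow> nat \<Rightarrow> ('v \<times> 'a) set set" where
  "wt_children evlog par v = evlog ` {u \<in> dom par. par u = Some v}"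

definition wt_eligible :: "(nat \<Rightarrow> ('v \<times> 'a) set) \<Rightarrow> nat \<Rightarrow> (nat \<rightharpoonup> nat) \<Rightarrow> nat \<Rightarrow> nat \<Rightarrow> bool" where
  "wt_eligible evlog t par k v \<longleftrightarrow> v \<in> insert t (dom par) \<and>
     evlog k \<notin> wt_children evlog par v \<and>
     orderable (insert (evlog k) (wt_children evlog par v)) (evlog v)"

text \<open>wt_proc evlog t k par dep: state after processing evlog entries t-1, ..., k.\<close>
inductive wt_proc :: "(nat \<Rightarrow> ('v \<times> 'a) set) \<Rightarrow> nat \<Rightarrow> nat \<Rightarrow> (nat \<rightharpoonup> nat) \<Rightarrow> (nat \<Rightarrow> nat) \<Rightarrow> bool"
  for evlog t where
  init: "wt_proc evlog t t Map.empty (\<lambda>_. 0)"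
| add: "\<lbrakk> wt_proc evlog t (Suc k) par dep; 1 \<le> k; wt_eligible evlog t par k v;
         \<forall>w. wt_eligible evlog t par k w \<longrightarrow> dep w \<le> dep v \<rbrakk>
       \<Longrightarrow> wt_proc evlog t k (par(k \<mapsto> v)) (dep(k := Suc (dep v)))"
| discard: "\<lbrakk> wt_proc evlog t (Suc k) par dep; 1 \<le> k; \<forall>w. \<not> wt_eligible evlog t par k w \<rbrakk>
       \<Longrightarrow> wt_proc evlog t k par dep"

text \<open>par is a possible witness tree \<tau>^t (any tie-breaking), rooted at t.\<close>
definition witness_tree :: "(nat \<Rightarrow> ('v \<times> 'a) set) \<Rightarrow> nat \<Rightarrow> (nat \<rightharpoonup> nat) \<Rightarrow> bool" where
  "witness_tree evlog t par \<longleftrightarrow> (\<exists>dep. wt_proc evlog t 1 par dep)"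

text \<open>Equality as rooted labeled trees: isomorphism preserving root, parents and labels.\<close>
definition wt_iso :: "(nat \<Rightarrow> ('v \<times> 'a) set) \<Rightarrow> nat \<Rightarrow> (nat \<rightharpoonup> nat) \<Rightarrow> nat \<Rightarrow> (nat \<rightharpoonup> nat) \<Rightarrow> bool" where
  "wt_iso evlog r1 par1 r2 par2 \<longleftrightarrow>
     (\<exists>f. bij_betw f (insert r1 (dom par1)) (insert r2 (dom par2)) \<and> f r1 = r2 \<and>
          (\<forall>u \<in> insert r1 (dom par1). evlog (f u) = evlog u) \<and>
          (\<forall>u \<in> dom par1. par2 (f u) = map_option f (par1 u)))"

end

theory Submission
  imports Defs
begin

text \<open>An isomorphism f between witness trees rooted at t1 and t2 must fix every node, so
  t1 = t2. Otherwise take a deepest node u with v = f u \<noteq> u. All nodes below u are fixed,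
  so u and v have the same children, all of which were resampled before min u v. Say
  u < v: when the construction of the tree rooted at t2 processed time u, the node v
  carried the label of u and was still childless, hence eligible, so u was attached
  strictly below v. Then u is a node deeper than f u in the second tree, and its preimage
  is a node deeper than u, hence fixed by f, i.e. u itself: a contradiction. The case
  v < u is symmetric, with the first tree in place of the second.\<close>

lemma wt_proc_bounds:
  assumes "wt_proc evlog t k par dep"
  shows "k \<le> t \<and> dom par \<subseteq> {k..<t}"
  using assms by induction force+

lemma wt_proc_parent:
  assumes "wt_proc evlog t k par dep"
  shows "dep t = 0 \<and>
    (\<forall>u w. par u = Some w \<longrightarrow> w \<in> insert t (dom par) \<and> u < w \<and> dep u = Suc (dep w))"
  using assms
proof induction
  case (add k par dep v)
  let ?par = "par(k \<mapsto> v)" and ?dep = "dep(k := Suc (dep v))"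
  have bounds: "Suc k \<le> t" "dom par \<subseteq> {Suc k..<t}"
    using wt_proc_bounds[OF add.hyps(1)] by auto
  have v: "v \<in> insert t (dom par)"
    using add.hyps(3) by (simp add: wt_eligible_def)
  with bounds have "k < v" by auto
  have "?dep t = 0" using add.IH bounds by simp
  moreover have "w \<in> insert t (dom ?par) \<and> u < w \<and> ?dep u = Suc (?dep w)"
    if "?par u = Some w" for u w
  proof (cases "u = k")
    case True
    with that v \<open>k < v\<close> show ?thesis by auto
  next
    case False
    with that have parent: "par u = Some w" by simp
    with add.IH bounds have "k < w" by fastforce
    with parent add.IH False show ?thesis by auto
  qed
  ultimately show ?case by blast
qed auto

lemma wt_eligible_if_childless:
  assumes "v \<in> insert t (dom par)" and "wt_children evlog par v = {}"
    and "evlog k = evlog v"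
  shows "wt_eligible evlog t par k v"
  using assms by (simp add: wt_eligible_def orderable_def)

text \<open>The children of v were all created before u, so v is still childless when time u
  is processed.\<close>

lemma wt_proc_repeated_label_deeper:
  assumes "wt_proc evlog t k par dep"
    and "k \<le> u" and "u < v" and "v \<in> insert t (dom par)" and "evlog u = evlog v"
    and "\<And>c. par c = Some v \<Longrightarrow> c < u"
  shows "u \<in> dom par \<and> dep v < dep u"
  using assms
proof (induction arbitrary: u v rule: wt_proc.induct)
  case (add k par dep w u v)
  have dom: "dom par \<subseteq> {Suc k..<t}"
    using wt_proc_bounds[OF add.hyps(1)] by simp
  have old_children: "par c = Some v \<Longrightarrow> c < u" for c
    using add.prems(5)[of c] dom by (cases "c = k") auto
  show ?case
  proof (cases "u = k")
    case True
    have "wt_children evlog par v = {}"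
      using old_children dom True by (fastforce simp: wt_children_def)
    with add.prems True have "wt_eligible evlog t par k v"
      by (intro wt_eligible_if_childless) auto
    with add.hyps(4) have "dep v \<le> dep w" by blast
    with True add.prems(2) show ?thesis by auto
  next
    case False
    with add.prems have "Suc k \<le> u" "v \<noteq> k" "v \<in> insert t (dom par)" by auto
    with add.IH[of u v] add.prems old_children False show ?thesis by auto
  qed
next
  case (discard k par dep u v)
  have dom: "dom par \<subseteq> {Suc k..<t}"
    using wt_proc_bounds[OF discard.hyps(1)] by simp
  show ?case
  proof (cases "u = k")
    case True
    have "wt_children evlog par v = {}"
      using discard.prems(5) dom True by (fastforce simp: wt_children_def)
    with discard.prems True have "wt_eligible evlog t par k v"
      by (intro wt_eligible_if_childless) auto
    with discard.hyps(3) show ?thesis by blast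
  next
    case False
    with discard show ?thesis by auto
  qed
qed auto

lemma parent_preserving_map_preserves_depth:
  assumes dep1: "dep1 r1 = 0"
    and par1: "\<And>u w. par1 u = Some w \<Longrightarrow> w \<in> insert r1 (dom par1) \<and> dep1 u = Suc (dep1 w)"
    and dep2: "dep2 r2 = 0"
    and par2: "\<And>u w. par2 u = Some w \<Longrightarrow> dep2 u = Suc (dep2 w)"
    and root: "f r1 = r2"
    and parents: "\<forall>u \<in> dom par1. par2 (f u) = map_option f (par1 u)"
    and "u \<in> insert r1 (dom par1)"
  shows "dep2 (f u) = dep1 u"
  using assms(7)
proof (induction "dep1 u" arbitrary: u)
  case 0
  then have "u = r1" using par1 by fastforce
  then show ?case using dep1 dep2 root by simp
next
  case (Suc n)
  then have "u \<in> dom par1" using dep1 by auto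
  then obtain w where w: "par1 u = Some w" by auto
  with par1 Suc show ?case
    using par2[of "f u" "f w"] parents \<open>u \<in> dom par1\<close> by auto
qed

lemma parent_preserving_bij_children:
  assumes bij: "bij_betw f (insert r1 (dom par1)) (insert r2 (dom par2))"
    and root: "f r1 = r2" and "r2 \<notin> dom par2"
    and par1: "\<And>c w. par1 c = Some w \<Longrightarrow> w \<in> insert r1 (dom par1)"
    and parents: "\<forall>c \<in> dom par1. par2 (f c) = map_option f (par1 c)"
    and u: "u \<in> insert r1 (dom par1)"
    and fixed: "\<And>c. par1 c = Some u \<Longrightarrow> f c = c"
  shows "par2 c = Some (f u) \<longleftrightarrow> par1 c = Some u"
proof
  assume c: "par2 c = Some (f u)"
  then have "c \<in> f ` insert r1 (dom par1)"
    using bij_betw_imp_surj_on[OF bij] by auto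
  then obtain c' where c': "c' \<in> insert r1 (dom par1)" "f c' = c" by blast
  have "c' \<noteq> r1" using c c' root \<open>r2 \<notin> dom par2\<close> by auto
  with c' obtain w where w: "par1 c' = Some w" by auto
  then have "par2 (f c') = Some (f w)"
    using bspec[OF parents, of c'] by (simp add: domI)
  with c c'(2) have "f w = f u" by simp
  then have "w = u"
    using inj_onD[OF bij_betw_imp_inj_on[OF bij] _ par1[OF w] u] by blast
  with w fixed[of c'] c'(2) show "par1 c = Some u" by simp
next
  assume "par1 c = Some u"
  then show "par2 c = Some (f u)"
    using bspec[OF parents, of c] fixed[of c] by (simp add: domI)
qed

locale witness_tree_iso =
  fixes evlog :: "nat \<Rightarrow> ('v \<times> 'a) set"
    and t1 t2 :: nat and par1 par2 :: "nat \<rightharpoonup> nat" and dep1 dep2 :: "nat \<Rightarrow> nat"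
    and f :: "nat \<Rightarrow> nat"
  assumes tree1: "wt_proc evlog t1 1 par1 dep1"
    and tree2: "wt_proc evlog t2 1 par2 dep2"
    and bij: "bij_betw f (insert t1 (dom par1)) (insert t2 (dom par2))"
    and root: "f t1 = t2"
    and label: "\<forall>u \<in> insert t1 (dom par1). evlog (f u) = evlog u"
    and parents: "\<forall>u \<in> dom par1. par2 (f u) = map_option f (par1 u)"
begin

lemma bounds1: "1 \<le> t1" "dom par1 \<subseteq> {1..<t1}"
  and bounds2: "1 \<le> t2" "dom par2 \<subseteq> {1..<t2}"
  using wt_proc_bounds[OF tree1] wt_proc_bounds[OF tree2] by auto

lemma root_depths: "dep1 t1 = 0" "dep2 t2 = 0"
  using wt_proc_parent[OF tree1] wt_proc_parent[OF tree2] by blast+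

lemma parent1: "par1 u = Some w \<Longrightarrow> w \<in> insert t1 (dom par1) \<and> u < w \<and> dep1 u = Suc (dep1 w)"
  and parent2: "par2 u = Some w \<Longrightarrow> w \<in> insert t2 (dom par2) \<and> u < w \<and> dep2 u = Suc (dep2 w)"
  using wt_proc_parent[OF tree1] wt_proc_parent[OF tree2] by blast+

lemma depth_preserved:
  assumes "u \<in> insert t1 (dom par1)"
  shows "dep2 (f u) = dep1 u"
  using parent1 parent2
  by (intro parent_preserving_map_preserves_depth[of dep1 t1 par1 dep2 t2 par2 f u,
        OF root_depths(1) _ root_depths(2) _ root parents assms]) blast+

lemma fixed_if_deeper_nodes_fixed:
  assumes u: "u \<in> insert t1 (dom par1)"
    and deeper_fixed: "\<And>x. x \<in> insert t1 (dom par1) \<Longrightarrow> dep1 u < dep1 x \<Longrightarrow> f x = x"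
  shows "f u = u"
proof (rule ccontr)
  assume moved: "f u \<noteq> u"
  have preimage_fixed: "f x = x" if "x \<in> insert t2 (dom par2)" "dep1 u < dep2 x" for x
  proof -
    have "x \<in> f ` insert t1 (dom par1)"
      using bij_betw_imp_surj_on[OF bij] that(1) by simp
    then obtain x' where x': "x' \<in> insert t1 (dom par1)" "f x' = x" by blast
    with that(2) have "dep1 u < dep1 x'"
      using depth_preserved[OF x'(1)] by simp
    then have "f x' = x'"
      using deeper_fixed[OF x'(1)] by simp
    with x'(2) show ?thesis by simp
  qed
  have parent_in_tree1: "\<And>c w. par1 c = Some w \<Longrightarrow> w \<in> insert t1 (dom par1)"
    using parent1 by blast
  have children_fixed: "f c = c" if "par1 c = Some u" for c
    using that parent1[OF that] by (intro deeper_fixed) auto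
  have t2_no_parent: "t2 \<notin> dom par2"
    using bounds2 by auto
  have children: "par2 c = Some (f u) \<longleftrightarrow> par1 c = Some u" for c
    by (rule parent_preserving_bij_children[OF bij root t2_no_parent parent_in_tree1 parents u
          children_fixed])
  have label_u: "evlog u = evlog (f u)"
    using bspec[OF label u] by simp
  have fu: "f u \<in> insert t2 (dom par2)"
    using bij_betw_apply[OF bij u] .
  consider "u < f u" | "f u < u" using moved by linarith
  then show False
  proof cases
    case 1
    have "1 \<le> u" using bounds1 u by auto
    moreover have "\<And>c. par2 c = Some (f u) \<Longrightarrow> c < u"
      using children parent1 by blast
    ultimately have "u \<in> dom par2 \<and> dep2 (f u) < dep2 u"
      using wt_proc_repeated_label_deeper[OF tree2 _ 1 fu label_u] by blast
    with preimage_fixed[of u] depth_preserved[OF u] moved show False by simp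
  next
    case 2
    have "1 \<le> f u" using bounds2 fu by auto
    moreover have "\<And>c. par1 c = Some u \<Longrightarrow> c < f u"
      using children parent2 by blast
    ultimately have "f u \<in> dom par1 \<and> dep1 u < dep1 (f u)"
      using wt_proc_repeated_label_deeper[OF tree1 _ 2 u label_u[symmetric]] by blast
    with deeper_fixed[of "f u"] depth_preserved[of "f u"] depth_preserved[OF u] show False
      by auto
  qed
qed

lemma fixes_all_nodes:
  assumes "u \<in> insert t1 (dom par1)"
  shows "f u = u"
proof (rule ccontr)
  define moved where "moved = {x \<in> insert t1 (dom par1). f x \<noteq> x}"
  assume "f u \<noteq> u"
  with assms have "dep1 ` moved \<noteq> {}" unfolding moved_def by auto
  moreover have "moved \<subseteq> {..t1}"
    using bounds1 unfolding moved_def by auto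
  then have finite_depths: "finite (dep1 ` moved)"
    by (simp add: finite_subset)
  ultimately have "Max (dep1 ` moved) \<in> dep1 ` moved"
    by (rule Max_in[rotated])
  then obtain v where v: "v \<in> moved" "dep1 v = Max (dep1 ` moved)"
    by auto
  have "f v = v"
  proof (rule fixed_if_deeper_nodes_fixed)
    show "v \<in> insert t1 (dom par1)" using v unfolding moved_def by simp
    fix x assume "x \<in> insert t1 (dom par1)" "dep1 v < dep1 x"
    with Max_ge[OF finite_depths, of "dep1 x"] v show "f x = x"
      unfolding moved_def by force
  qed
  with v show False unfolding moved_def by simp
qed

end

lemma isomorphic_witness_trees_same_root:
  assumes "witness_tree evlog t1 par1" and "witness_tree evlog t2 par2"
    and "wt_iso evlog t1 par1 t2 par2"
  shows "t1 = t2"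
proof -
  obtain dep1 dep2 where "wt_proc evlog t1 1 par1 dep1" and "wt_proc evlog t2 1 par2 dep2"
    using assms(1,2) unfolding witness_tree_def by blast
  moreover obtain f where "bij_betw f (insert t1 (dom par1)) (insert t2 (dom par2))"
    and "f t1 = t2" and "\<forall>u \<in> insert t1 (dom par1). evlog (f u) = evlog u"
    and "\<forall>u \<in> dom par1. par2 (f u) = map_option f (par1 u)"
    using assms(3) unfolding wt_iso_def by blast
  ultimately interpret witness_tree_iso evlog t1 t2 par1 par2 dep1 dep2 f
    by unfold_locales
  show ?thesis
    using fixes_all_nodes[of t1] root by simp
qed

theorem proposition2p7:
  fixes \<Omega> :: "'v::finite \<Rightarrow> 'a pmf" and D :: "'v \<Rightarrow> 'a set"
    and \<B> :: "('v \<times> 'a) set set"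
    and asg :: "nat \<Rightarrow> 'v \<Rightarrow> 'a" and evlog :: "nat \<Rightarrow> ('v \<times> 'a) set"
  assumes "\<forall>i. finite (D i) \<and> set_pmf (\<Omega> i) \<subseteq> D i"
    and "finite \<B>" and "\<forall>B\<in>\<B>. is_bad_event B \<and> (\<forall>(i, j)\<in>B. j \<in> D i)"
    and "mt_run \<Omega> \<B> asg evlog T"
    and "1 \<le> t1" and "t1 < t2" and "t2 \<le> T"
    and "witness_tree evlog t1 par1" and "witness_tree evlog t2 par2"
  shows "\<not> wt_iso evlog t1 par1 t2 par2"
  using isomorphic_witness_trees_same_root[OF assms(8,9)] \<open>t1 < t2\<close> by blast

end
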